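(* Let $G:\{0,1\}^n\to\{0,1\}^N$ be a Boolean circuit and $\mathsf{Ext}:\{0,1\}^N\times\{0,1\}^d\to\{0,1\}^m$ be linear, i.e., for each $r\in\{0,1\}^d$ the map $\mathsf{Ext}(\cdot,r):\mathbb{F}_2^N\to\mathbb{F}_2^m$ is $\mathbb{F}_2$-linear; for each $r$ fix a circuit $\mathsf{Ext}_r$ of fan-in-2 $\oplus$ gates computing $\mathsf{Ext}(\cdot,r)$, and let $C_r:\{0,1\}^n\to\{0,1\}^m$ be the circuit $C_r(s)=\mathsf{Ext}(G(s),r)$ obtained by feeding the outputs of $G$ into $\mathsf{Ext}_r$. Then for every $y\in\{0,1\}^N$ and $r\in\{0,1\}^d$, there is a simple parity reduction from $\tau_y(G)$ to $\tau_z(C_r)$, where $z:=\mathsf{Ext}(y,r)$; that is, $\tau_y(G)\le^{\oplus}\tau_z(C_r)$.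
   Context: For a circuit $G$ with $n$ inputs and $\ell$ outputs, whose gates have fan-in at most 2 over a basis containing $\oplus$, and $b\in\{0,1\}^\ell$, $\tau_b(G)$ is the 3-CNF with variables $x\in\{0,1\}^n$ (inputs) and $\mathsf{hist}\in\{0,1\}^s$, one variable $v_g$ per internal gate $g$ (including output gates; for input gates $v_g$ is the corresponding $x_i$). For every internal gate $g$ with operation $\circ_g$ and children $g_l,g_r$ it contains the clauses of the constraint $v_g=v_{g_l}\circ_g v_{g_r}$ (a 3-CNF of at most 8 clauses), and for each $i\in[\ell]$ with $i$-th output gate $g_i$ it contains the width-1 clause expressing $v_{g_i}=b_i$. Thus $\tau_b(G)$ is satisfiable iff $b\in\mathrm{Range}(G)$. Simple parity reduction: for CNFs $F(x_1,\dots,x_n)$ and $H(y_1,\dots,y_{n'})$, $F\le^{\oplus}H$ if there is an $\mathbb{F}_2$-linear map $\mathsf{redu}:\{0,1\}^n\to\{0,1\}^{n'}$ (each output bit is the XOR of a subset of input bits) such that for every clause $g$ of $H$, one of the following holds: $g\circ\mathsf{redu}\equiv\mathsf{True}$; $g\circ\mathsf{redu}$ equals some clause of $F$; or $g$ is a width-1 clause (a single literal, i.e., an equation $y_i=c$) and $g\circ\mathsf{redu}$ (a linear equation) is the XOR (sum over $\mathbb{F}_2$) of a subset of clauses of $F$, these clauses being width-1. *)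

theory Defs
  imports Main
begin

text \<open>Nodes are numbered: node k < cin C is the k-th input; node cin C + j is the
  j-th internal gate (cgates C ! j = (op, left child, right child)).
  Gates of fan-in < 2 are represented by binary operations ignoring arguments;
  the basis is arbitrary (all binary Boolean functions, which contains xor).\<close>

record circuit =
  cin    :: nat
  cgates :: "((bool \<Rightarrow> bool \<Rightarrow> bool) \<times> nat \<times> nat) list"
  couts  :: "nat list"

definition wf_circuit :: "circuit \<Rightarrow> bool" where
  "wf_circuit C \<longleftrightarrow>
     (\<forall>j < length (cgates C). case cgates C ! j of (f, l, r) \<Rightarrow> l < cin C + j \<and> r < cin C + j) \<and>
     (\<forall>q \<in> set (couts C). q < cin C + length (cgates C))"

definition node_vals :: "circuit \<Rightarrow> bool list \<Rightarrow> bool list" where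
  "node_vals C x = foldl (\<lambda>vs (f, l, r). vs @ [f (vs ! l) (vs ! r)]) x (cgates C)"

definition circ_eval :: "circuit \<Rightarrow> bool list \<Rightarrow> bool list" where
  "circ_eval C x = map (\<lambda>q. node_vals C x ! q) (couts C)"

definition xor_circuit :: "circuit \<Rightarrow> bool" where
  "xor_circuit C \<longleftrightarrow> (\<forall>(f, l, r) \<in> set (cgates C). f = (\<lambda>a b. a \<noteq> b))"

text \<open>Feeding the outputs of G into the inputs of E (requires cin E = length (couts G)).\<close>
definition compose :: "circuit \<Rightarrow> circuit \<Rightarrow> circuit" where
  "compose G E =
     (let rn = (\<lambda>k. if k < cin E then couts G ! k
                    else cin G + length (cgates G) + (k - cin E))
      in \<lparr> cin = cin G,
           cgates = cgates G @ map (\<lambda>(f, l, r). (f, rn l, rn r)) (cgates E),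
           couts = map rn (couts E) \<rparr>)"

text \<open>A literal (v, c) expresses the equation v = c; a clause is a disjunction of
  literals; a CNF is a pair (number of variables, set of clauses).\<close>
type_synonym lit = "nat \<times> bool"
type_synonym clause = "lit list"
type_synonym cnf = "nat \<times> clause set"

definition clause_sat :: "(nat \<Rightarrow> bool) \<Rightarrow> clause \<Rightarrow> bool" where
  "clause_sat \<alpha> g \<longleftrightarrow> (\<exists>(v, c) \<in> set g. \<alpha> v = c)"

text \<open>Canonical CNF of the constraint v_g = v_l op v_r: for each pair (a,b) the clause
  (v_l \<noteq> a) \<or> (v_r \<noteq> b) \<or> (v_g = op a b).\<close>
definition gate_clauses :: "nat \<Rightarrow> (bool \<Rightarrow> bool \<Rightarrow> bool) \<Rightarrow> nat \<Rightarrow> nat \<Rightarrow> clause set" where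
  "gate_clauses g f l r = {[(l, \<not> a), (r, \<not> b), (g, f a b)] | a b. True}"

text \<open>tau_b(C): variables are the node indices (inputs, then internal gates).\<close>
definition tau :: "bool list \<Rightarrow> circuit \<Rightarrow> cnf" where
  "tau b C =
     (cin C + length (cgates C),
      (\<Union>j < length (cgates C). case cgates C ! j of (f, l, r) \<Rightarrow> gate_clauses (cin C + j) f l r)
      \<union> {[(couts C ! i, b ! i)] | i. i < length (couts C)})"

definition xor_sum :: "nat set \<Rightarrow> (nat \<Rightarrow> bool) \<Rightarrow> bool" where
  "xor_sum A x = odd (card {j \<in> A. x j})"

definition redu :: "(nat \<Rightarrow> nat set) \<Rightarrow> (nat \<Rightarrow> bool) \<Rightarrow> (nat \<Rightarrow> bool)" where
  "redu S x = (\<lambda>i. xor_sum (S i) x)"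

text \<open>Case (iii): clause g = [(i,c)] is the linear equation XOR(S i) = c; it must be
  the F2-sum of a subset T of width-1 clauses of F (clause [(j,b)] being x_j = b).\<close>
definition xor_of_unit_clauses :: "(nat \<Rightarrow> nat set) \<Rightarrow> clause \<Rightarrow> clause set \<Rightarrow> bool" where
  "xor_of_unit_clauses S g F \<longleftrightarrow>
     (\<exists>i c. g = [(i, c)] \<and>
        (\<exists>T \<subseteq> F. finite T \<and> (\<forall>h \<in> T. length h = 1) \<and>
           (\<forall>k. (k \<in> S i) = odd (card {h \<in> T. fst (hd h) = k})) \<and>
           c = odd (card {h \<in> T. snd (hd h)})))"

definition parity_reduces :: "cnf \<Rightarrow> cnf \<Rightarrow> bool" (infix "\<le>\<^sub>\<oplus>" 50) where
  "F \<le>\<^sub>\<oplus> H \<longleftrightarrow>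
     (\<exists>S. (\<forall>i < fst H. S i \<subseteq> {..<fst F}) \<and>
        (\<forall>g \<in> snd H.
            (\<forall>x. clause_sat (redu S x) g)
          \<or> (\<exists>h \<in> snd F. \<forall>x. clause_sat (redu S x) g = clause_sat x h)
          \<or> xor_of_unit_clauses S g (snd F)))"

end

theory Submission
  imports Defs
begin

(* Running the XOR circuit E on sets of output nodes of G, with symmetric difference as the
   gate operation, assigns to each node of E its span: the set of outputs of G whose XOR the
   node computes on G(s).  The reduction keeps the variables of G and sends the variable of a
   gate of E to the XOR of its span.  Gate clauses of G are then unchanged, the clauses of an
   XOR gate of E become tautologies, and the unit clause setting output i of E to z_i becomes
   the equation that the span of this output XORs to z_i.  Running E instead on the unit
   clauses v_k = y_k of tau_y(G), where v_k is the k-th output of G, yields for the same node a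
   set of unit clauses whose sum is exactly this equation, because z = E(y) is computed by the
   same circuit. *)

lemma odd_card_sym_diff:
  assumes "finite A" "finite B"
  shows "odd (card (sym_diff A B)) \<longleftrightarrow> odd (card A) \<noteq> odd (card B)"
proof -
  have "card (sym_diff A B) = card (A - B) + card (B - A)"
    using assms by (intro card_Un_disjoint) auto
  moreover have "card (A - B) = card A - card (A \<inter> B)" "card (B - A) = card B - card (A \<inter> B)"
    using assms by (simp_all add: card_Diff_subset_Int Int_commute)
  moreover have "card (A \<inter> B) \<le> card A" "card (A \<inter> B) \<le> card B"
    using assms by (simp_all add: card_mono)
  ultimately show ?thesis by presburger
qed

lemma odd_card_filter_sym_diff:
  assumes "finite A" "finite B"
  shows "odd (card {x \<in> sym_diff A B. P x}) \<longleftrightarrow>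
           odd (card {x \<in> A. P x}) \<noteq> odd (card {x \<in> B. P x})"
proof -
  have "{x \<in> sym_diff A B. P x} = sym_diff {x \<in> A. P x} {x \<in> B. P x}" by blast
  then show ?thesis using assms by (simp add: odd_card_sym_diff)
qed

lemma odd_card_filter_singleton: "odd (card {x \<in> {a}. P x}) \<longleftrightarrow> P a"
  by (simp add: Collect_conv_if)

lemma xor_sum_sym_diff:
  "finite A \<Longrightarrow> finite B \<Longrightarrow> xor_sum (sym_diff A B) x \<longleftrightarrow> xor_sum A x \<noteq> xor_sum B x"
  unfolding xor_sum_def by (rule odd_card_filter_sym_diff)

lemma clause_sat_redu_singletons:
  assumes "\<And>v c. (v, c) \<in> set g \<Longrightarrow> S v = {v}"
  shows "clause_sat (redu S x) g \<longleftrightarrow> clause_sat x g"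
  unfolding clause_sat_def
proof (rule bex_cong)
  fix l assume l_in: "l \<in> set g"
  obtain v c where l: "l = (v, c)" by (cases l)
  with l_in have "(v, c) \<in> set g" by simp
  have "redu S x v = x v"
    unfolding redu_def xor_sum_def assms[OF \<open>(v, c) \<in> set g\<close>]
    by (rule odd_card_filter_singleton)
  then show "(case l of (v, c) \<Rightarrow> redu S x v = c) \<longleftrightarrow> (case l of (v, c) \<Rightarrow> x v = c)"
    by (simp add: l)
qed simp

definition wf_gates :: "nat \<Rightarrow> ('g \<times> nat \<times> nat) list \<Rightarrow> bool" where
  "wf_gates n gs \<longleftrightarrow> (\<forall>j < length gs. case gs ! j of (_, l, r) \<Rightarrow> l < n + j \<and> r < n + j)"

lemma wf_gates_Nil [simp]: "wf_gates n []"
  by (simp add: wf_gates_def)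

lemma wf_gates_Cons [simp]:
  "wf_gates n ((g, l, r) # gs) \<longleftrightarrow> l < n \<and> r < n \<and> wf_gates (Suc n) gs"
  unfolding wf_gates_def by (simp add: All_less_Suc2)

lemma wf_circuit_wf_gates: "wf_circuit C \<Longrightarrow> wf_gates (cin C) (cgates C)"
  by (simp add: wf_circuit_def wf_gates_def)

definition eval_xor_gates ::
    "('a \<Rightarrow> 'a \<Rightarrow> 'a) \<Rightarrow> ('g \<times> nat \<times> nat) list \<Rightarrow> 'a list \<Rightarrow> 'a list" where
  "eval_xor_gates add gs vs = foldl (\<lambda>vs (_, l, r). vs @ [add (vs ! l) (vs ! r)]) vs gs"

lemma eval_xor_gates_Nil [simp]: "eval_xor_gates add [] vs = vs"
  by (simp add: eval_xor_gates_def)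

lemma eval_xor_gates_Cons [simp]:
  "eval_xor_gates add ((g, l, r) # gs) vs = eval_xor_gates add gs (vs @ [add (vs ! l) (vs ! r)])"
  by (simp add: eval_xor_gates_def)

lemma length_eval_xor_gates [simp]: "length (eval_xor_gates add gs vs) = length vs + length gs"
  by (induction gs arbitrary: vs) auto

lemma nth_eval_xor_gates_prefix: "i < length vs \<Longrightarrow> eval_xor_gates add gs vs ! i = vs ! i"
  by (induction gs arbitrary: vs) (auto simp: nth_append)

lemma nth_eval_xor_gates_gate:
  assumes "wf_gates (length vs) gs" "j < length gs" "gs ! j = (g, l, r)"
  shows "eval_xor_gates add gs vs ! (length vs + j) =
           add (eval_xor_gates add gs vs ! l) (eval_xor_gates add gs vs ! r)"
  using assms
proof (induction gs arbitrary: vs j)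
  case Nil
  then show ?case by simp
next
  case (Cons gate gs)
  obtain g' l' r' where gate: "gate = (g', l', r')" by (cases gate)
  define vs' where "vs' = vs @ [add (vs ! l') (vs ! r')]"
  have step: "eval_xor_gates add (gate # gs) vs = eval_xor_gates add gs vs'"
    by (simp add: gate vs'_def)
  show ?case
  proof (cases j)
    case 0
    then show ?thesis using Cons.prems gate
      by (simp add: step vs'_def nth_eval_xor_gates_prefix nth_append)
  next
    case (Suc j')
    then have "eval_xor_gates add gs vs' ! (length vs' + j') =
                 add (eval_xor_gates add gs vs' ! l) (eval_xor_gates add gs vs' ! r)"
      using Cons by (intro Cons.IH) (simp_all add: gate vs'_def)
    then show ?thesis by (simp add: step Suc vs'_def)
  qed
qed

lemma eval_xor_gates_closed:
  assumes "wf_gates (length vs) gs" "set vs \<subseteq> D"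
    and "\<And>a c. a \<in> D \<Longrightarrow> c \<in> D \<Longrightarrow> add a c \<in> D"
  shows "set (eval_xor_gates add gs vs) \<subseteq> D"
  using assms(1,2)
proof (induction gs arbitrary: vs)
  case (Cons gate gs)
  obtain g l r where gate: "gate = (g, l, r)" by (cases gate)
  have "set (vs @ [add (vs ! l) (vs ! r)]) \<subseteq> D"
    using Cons.prems gate nth_mem by (auto intro: assms(3))
  then show ?case
    using Cons gate by simp
qed simp

lemma map_eval_xor_gates:
  assumes "wf_gates (length vs) gs" "set vs \<subseteq> D"
    and "\<And>a c. a \<in> D \<Longrightarrow> c \<in> D \<Longrightarrow> add a c \<in> D"
    and "\<And>a c. a \<in> D \<Longrightarrow> c \<in> D \<Longrightarrow> h (add a c) = add' (h a) (h c)"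
  shows "map h (eval_xor_gates add gs vs) = eval_xor_gates add' gs (map h vs)"
  using assms(1,2)
proof (induction gs arbitrary: vs)
  case (Cons gate gs)
  obtain g l r where gate: "gate = (g, l, r)" by (cases gate)
  have lr: "l < length vs" "r < length vs" "vs ! l \<in> D" "vs ! r \<in> D"
    using Cons.prems gate nth_mem by auto
  then have "map h (vs @ [add (vs ! l) (vs ! r)]) = map h vs @ [add' (map h vs ! l) (map h vs ! r)]"
    by (simp add: assms(4))
  moreover have "set (vs @ [add (vs ! l) (vs ! r)]) \<subseteq> D"
    using Cons.prems lr by (auto intro: assms(3))
  ultimately show ?case
    using Cons gate by simp
qed simp

definition num_nodes :: "circuit \<Rightarrow> nat" where
  "num_nodes C = cin C + length (cgates C)"

definition xor_vals :: "circuit \<Rightarrow> ('a \<Rightarrow> 'a \<Rightarrow> 'a) \<Rightarrow> (nat \<Rightarrow> 'a) \<Rightarrow> 'a list" where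
  "xor_vals E add b = eval_xor_gates add (cgates E) (map b [0..<cin E])"

lemma length_xor_vals [simp]: "length (xor_vals E add b) = num_nodes E"
  by (simp add: xor_vals_def num_nodes_def)

lemma nth_xor_vals_input: "k < cin E \<Longrightarrow> xor_vals E add b ! k = b k"
  by (simp add: xor_vals_def nth_eval_xor_gates_prefix)

lemma nth_xor_vals_gate:
  assumes "wf_circuit E" "j < length (cgates E)" "cgates E ! j = (f, l, r)"
  shows "xor_vals E add b ! (cin E + j) = add (xor_vals E add b ! l) (xor_vals E add b ! r)"
  using nth_eval_xor_gates_gate[of "map b [0..<cin E]" "cgates E" j f l r add] assms
  by (simp add: xor_vals_def wf_circuit_wf_gates)

lemma nth_xor_vals_closed:
  assumes "wf_circuit E" "q < num_nodes E" "\<And>k. k < cin E \<Longrightarrow> b k \<in> D"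
    and "\<And>a c. a \<in> D \<Longrightarrow> c \<in> D \<Longrightarrow> add a c \<in> D"
  shows "xor_vals E add b ! q \<in> D"
proof -
  have "set (xor_vals E add b) \<subseteq> D"
    unfolding xor_vals_def using assms
    by (intro eval_xor_gates_closed) (auto simp: wf_circuit_wf_gates)
  then show ?thesis using assms(2) nth_mem by fastforce
qed

lemma nth_xor_vals_hom:
  assumes "wf_circuit E" "q < num_nodes E" "\<And>k. k < cin E \<Longrightarrow> b k \<in> D"
    and "\<And>a c. a \<in> D \<Longrightarrow> c \<in> D \<Longrightarrow> add a c \<in> D"
    and "\<And>a c. a \<in> D \<Longrightarrow> c \<in> D \<Longrightarrow> h (add a c) = add' (h a) (h c)"
  shows "h (xor_vals E add b ! q) = xor_vals E add' (h \<circ> b) ! q"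
proof -
  have "map h (xor_vals E add b) = xor_vals E add' (h \<circ> b)"
    unfolding xor_vals_def using assms
    by (subst map_eval_xor_gates[where D = D]) (auto simp: wf_circuit_wf_gates)
  then show ?thesis using assms(2) by (metis length_xor_vals nth_map)
qed

lemma node_vals_xor_circuit:
  assumes "xor_circuit E" "length u = cin E"
  shows "node_vals E u = xor_vals E (\<noteq>) ((!) u)"
  unfolding node_vals_def xor_vals_def eval_xor_gates_def
proof (rule foldl_cong)
  show "u = map ((!) u) [0..<cin E]" using assms(2) map_nth by metis
  show "(\<lambda>vs (f, l, r). vs @ [f (vs ! l) (vs ! r)]) vs gate =
          (\<lambda>vs (_, l, r). vs @ [vs ! l \<noteq> vs ! r]) vs gate"
    if "gate \<in> set (cgates E)" for vs gate
    using assms(1) that unfolding xor_circuit_def by fastforce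
qed simp

lemma tau_clauseE:
  assumes "g \<in> snd (tau b C)"
  obtains (gate) j f l r where "j < length (cgates C)" "cgates C ! j = (f, l, r)"
      "g \<in> gate_clauses (cin C + j) f l r"
  | (unit) i where "i < length (couts C)" "g = [(couts C ! i, b ! i)]"
  using assms unfolding tau_def by (auto split: prod.splits) (metis surj_pair)

lemma gate_clauses_subset_tau:
  "j < length (cgates C) \<Longrightarrow> cgates C ! j = (f, l, r) \<Longrightarrow>
     gate_clauses (cin C + j) f l r \<subseteq> snd (tau b C)"
  unfolding tau_def by force

lemma unit_clauses_subset_tau:
  "{[(couts C ! i, b ! i)] | i. i < length (couts C)} \<subseteq> snd (tau b C)"
  unfolding tau_def by auto

lemma couts_less_num_nodes:
  "wf_circuit C \<Longrightarrow> k < length (couts C) \<Longrightarrow> couts C ! k < num_nodes C"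
  unfolding wf_circuit_def num_nodes_def by auto

locale xor_postcomposition =
  fixes G E :: circuit
  assumes wf_G: "wf_circuit G" and wf_E: "wf_circuit E" and xor_E: "xor_circuit E"
    and cin_E: "cin E = length (couts G)"
begin

definition compose_node :: "nat \<Rightarrow> nat" where
  "compose_node k = (if k < cin E then couts G ! k else num_nodes G + (k - cin E))"

lemma compose_eq:
  "compose G E =
     \<lparr> cin = cin G,
       cgates = cgates G @ map (\<lambda>(f, l, r). (f, compose_node l, compose_node r)) (cgates E),
       couts = map compose_node (couts E) \<rparr>"
  unfolding compose_def compose_node_def num_nodes_def Let_def by simp

lemma num_nodes_compose: "num_nodes (compose G E) = num_nodes G + length (cgates E)"
  by (simp add: compose_eq num_nodes_def)

definition spans :: "nat set list" where
  "spans = xor_vals E sym_diff (\<lambda>k. {couts G ! k})"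

definition redu_vars :: "nat \<Rightarrow> nat set" where
  "redu_vars i = (if i < num_nodes G then {i} else spans ! (cin E + (i - num_nodes G)))"

lemma spans_subset: "q < num_nodes E \<Longrightarrow> spans ! q \<subseteq> {..<num_nodes G}"
  unfolding spans_def using wf_G wf_E cin_E couts_less_num_nodes
  by (intro nth_xor_vals_closed[where D = "Pow {..<num_nodes G}", simplified]) auto

lemma finite_spans: "q < num_nodes E \<Longrightarrow> finite (spans ! q)"
  using spans_subset finite_subset by blast

lemma redu_vars_compose_node: "q < num_nodes E \<Longrightarrow> redu_vars (compose_node q) = spans ! q"
  using couts_less_num_nodes[OF wf_G] cin_E
  by (auto simp: redu_vars_def compose_node_def spans_def nth_xor_vals_input)

lemma redu_vars_subset:
  assumes "i < num_nodes (compose G E)"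
  shows "redu_vars i \<subseteq> {..<num_nodes G}"
proof (cases "i < num_nodes G")
  case False
  then have "cin E + (i - num_nodes G) < num_nodes E"
    using assms by (simp add: num_nodes_compose num_nodes_def[of E])
  then show ?thesis
    using False spans_subset by (simp add: redu_vars_def)
qed (simp add: redu_vars_def)

lemma clause_sat_redu_xor_gate:
  assumes "j < length (cgates E)" "cgates E ! j = (f, l, r)"
    and "g \<in> gate_clauses (num_nodes G + j) f (compose_node l) (compose_node r)"
  shows "clause_sat (redu redu_vars x) g"
proof -
  have f: "f = (\<noteq>)"
    using xor_E assms(1,2) nth_mem unfolding xor_circuit_def by fastforce
  have lr: "l < num_nodes E" "r < num_nodes E"
    using wf_E assms(1,2) unfolding wf_circuit_def num_nodes_def by fastforce+
  have "redu_vars (num_nodes G + j) = sym_diff (spans ! l) (spans ! r)"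
    using nth_xor_vals_gate[OF wf_E assms(1,2)] by (simp add: redu_vars_def spans_def)
  then have "redu redu_vars x (num_nodes G + j) \<longleftrightarrow>
      redu redu_vars x (compose_node l) \<noteq> redu redu_vars x (compose_node r)"
    using lr by (simp add: redu_def redu_vars_compose_node xor_sum_sym_diff finite_spans)
  moreover obtain a b where
    "g = [(compose_node l, \<not> a), (compose_node r, \<not> b), (num_nodes G + j, a \<noteq> b)]"
    using assms(3) unfolding gate_clauses_def f by blast
  ultimately show ?thesis
    unfolding clause_sat_def by auto
qed

lemma compose_gate_clause_reduces:
  assumes "j < length (cgates (compose G E))" "cgates (compose G E) ! j = (f, l, r)"
    and "g \<in> gate_clauses (cin (compose G E) + j) f l r"
  shows "(\<forall>x. clause_sat (redu redu_vars x) g) \<or>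
         (\<exists>h \<in> snd (tau y G). \<forall>x. clause_sat (redu redu_vars x) g = clause_sat x h)"
proof (cases "j < length (cgates G)")
  case True
  then have gate: "cgates G ! j = (f, l, r)" and g: "g \<in> gate_clauses (cin G + j) f l r"
    using assms(2,3) by (simp_all add: compose_eq nth_append)
  have "l < num_nodes G" "r < num_nodes G" "cin G + j < num_nodes G"
    using wf_G True gate unfolding wf_circuit_def num_nodes_def by fastforce+
  then have "clause_sat (redu redu_vars x) g = clause_sat x g" for x
    using g by (intro clause_sat_redu_singletons) (auto simp: gate_clauses_def redu_vars_def)
  moreover have "g \<in> snd (tau y G)"
    using gate_clauses_subset_tau[OF True gate] g by blast
  ultimately show ?thesis by blast
next
  case False
  define j' where "j' = j - length (cgates G)"
  have j': "j' < length (cgates E)" "cin (compose G E) + j = num_nodes G + j'"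
    using False assms(1) by (auto simp: j'_def compose_eq num_nodes_def)
  obtain f' l' r' where gate: "cgates E ! j' = (f', l', r')" by (cases "cgates E ! j'")
  have "f = f'" "l = compose_node l'" "r = compose_node r'"
    using assms(2) False j' gate by (simp_all add: compose_eq nth_append j'_def)
  then show ?thesis
    using clause_sat_redu_xor_gate[OF j'(1) gate] assms(3) j'(2) by simp
qed

lemma compose_unit_clause_xor_of_unit_clauses:
  assumes "length y = length (couts G)" "i < length (couts E)"
  shows "xor_of_unit_clauses redu_vars
           [(compose_node (couts E ! i), circ_eval E y ! i)] (snd (tau y G))"
proof -
  define q where "q = couts E ! i"
  define U where "U = {[(couts G ! k, y ! k)] | k. k < length (couts G)}"
  define T where "T = xor_vals E sym_diff (\<lambda>k. {[(couts G ! k, y ! k)]}) ! q"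
  have q: "q < num_nodes E"
    using couts_less_num_nodes[OF wf_E assms(2)] by (simp add: q_def)
  have "finite U" unfolding U_def by simp
  have T_U: "T \<subseteq> U"
    unfolding T_def using wf_E cin_E q
    by (intro nth_xor_vals_closed[where D = "Pow U", simplified]) (auto simp: U_def)
  then have "finite T" using \<open>finite U\<close> finite_subset by blast
  have T_parity: "odd (card {h \<in> T. P h}) \<longleftrightarrow> xor_vals E (\<noteq>) (\<lambda>k. P [(couts G ! k, y ! k)]) ! q"
    for P
  proof -
    have "odd (card {h \<in> T. P h}) \<longleftrightarrow>
        xor_vals E (\<noteq>) ((\<lambda>A. odd (card {h \<in> A. P h})) \<circ> (\<lambda>k. {[(couts G ! k, y ! k)]})) ! q"
      unfolding T_def
    proof (rule nth_xor_vals_hom[OF wf_E q, where D = "Pow U"])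
      show "odd (card {h \<in> sym_diff A B. P h}) \<longleftrightarrow>
          odd (card {h \<in> A. P h}) \<noteq> odd (card {h \<in> B. P h})" if "A \<in> Pow U" "B \<in> Pow U" for A B
        using that \<open>finite U\<close> by (intro odd_card_filter_sym_diff) (auto intro: finite_subset)
    qed (auto simp: U_def cin_E)
    then show ?thesis
      unfolding comp_def odd_card_filter_singleton .
  qed
  have "v \<in> spans ! q \<longleftrightarrow> xor_vals E (\<noteq>) (\<lambda>k. couts G ! k = v) ! q" for v
  proof -
    have "v \<in> spans ! q \<longleftrightarrow> xor_vals E (\<noteq>) ((\<lambda>A. v \<in> A) \<circ> (\<lambda>k. {couts G ! k})) ! q"
      unfolding spans_def by (rule nth_xor_vals_hom[OF wf_E q, where D = UNIV]) auto
    also have "(\<lambda>A. v \<in> A) \<circ> (\<lambda>k. {couts G ! k}) = (\<lambda>k. couts G ! k = v)"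
      by auto
    finally show ?thesis .
  qed
  then have "v \<in> redu_vars (compose_node q) \<longleftrightarrow> odd (card {h \<in> T. fst (hd h) = v})" for v
    by (simp add: T_parity redu_vars_compose_node[OF q])
  moreover have "circ_eval E y ! i \<longleftrightarrow> odd (card {h \<in> T. snd (hd h)})"
    using xor_E cin_E assms by (simp add: T_parity circ_eval_def node_vals_xor_circuit q_def)
  moreover have "T \<subseteq> snd (tau y G)" "\<forall>h \<in> T. length h = 1"
    using T_U unit_clauses_subset_tau[of G y] by (auto simp: U_def)
  ultimately show ?thesis
    unfolding xor_of_unit_clauses_def q_def using \<open>finite T\<close>
    by (intro exI[of _ T] exI conjI) auto
qed

theorem parity_reduces_compose:
  assumes "length y = length (couts G)"
  shows "tau y G \<le>\<^sub>\<oplus> tau (circ_eval E y) (compose G E)"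
  unfolding parity_reduces_def
proof (intro exI conjI allI impI ballI)
  show "redu_vars i \<subseteq> {..<fst (tau y G)}" if "i < fst (tau (circ_eval E y) (compose G E))" for i
    using redu_vars_subset that by (simp add: tau_def num_nodes_def)
next
  fix g assume "g \<in> snd (tau (circ_eval E y) (compose G E))"
  then show "(\<forall>x. clause_sat (redu redu_vars x) g) \<or>
         (\<exists>h \<in> snd (tau y G). \<forall>x. clause_sat (redu redu_vars x) g = clause_sat x h) \<or>
         xor_of_unit_clauses redu_vars g (snd (tau y G))"
  proof (cases rule: tau_clauseE)
    case (gate j f l r)
    then show ?thesis using compose_gate_clause_reduces by blast
  next
    case (unit i)
    then show ?thesis
      using compose_unit_clause_xor_of_unit_clauses[OF assms] by (simp add: compose_eq)
  qed
qed

end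

theorem claim3p4:
  fixes G :: circuit
    and Ext :: "bool list \<Rightarrow> bool list \<Rightarrow> bool list"
    and ExtC :: "bool list \<Rightarrow> circuit"
    and n N d m :: nat
    and y r :: "bool list"
  assumes G_wf: "wf_circuit G" and G_in: "cin G = n" and G_out: "length (couts G) = N"
    and Ext_len: "\<And>u s. length u = N \<Longrightarrow> length s = d \<Longrightarrow> length (Ext u s) = m"
    and Ext_lin: "\<And>u v s. length u = N \<Longrightarrow> length v = N \<Longrightarrow> length s = d \<Longrightarrow>
                   Ext (map2 (\<noteq>) u v) s = map2 (\<noteq>) (Ext u s) (Ext v s)"
    and ExtC_wf: "\<And>s. length s = d \<Longrightarrow> wf_circuit (ExtC s)"
    and ExtC_xor: "\<And>s. length s = d \<Longrightarrow> xor_circuit (ExtC s)"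
    and ExtC_in: "\<And>s. length s = d \<Longrightarrow> cin (ExtC s) = N"
    and ExtC_computes: "\<And>s u. length s = d \<Longrightarrow> length u = N \<Longrightarrow> circ_eval (ExtC s) u = Ext u s"
    and y_len: "length y = N" and r_len: "length r = d"
  shows "tau y G \<le>\<^sub>\<oplus> tau (Ext y r) (compose G (ExtC r))"
proof -
  interpret xor_postcomposition G "ExtC r"
    using G_wf G_out ExtC_wf ExtC_xor ExtC_in r_len by unfold_locales simp_all
  have "tau y G \<le>\<^sub>\<oplus> tau (circ_eval (ExtC r) y) (compose G (ExtC r))"
    using G_out y_len by (intro parity_reduces_compose) simp
  then show ?thesis
    using ExtC_computes[OF r_len y_len] by simp
qed

end
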